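(* Consider, for parameters $p>0$ and $r>0$, the planar system $$\dot x = -x-y,\qquad \dot y = ry+px-x^2y .$$ (i) For each fixed $p>1$, as $r$ crosses $1$ the equilibrium $(0,0)$ undergoes a supercritical Hopf bifurcation (negative first Lyapunov coefficient), with natural frequency $\omega^*=\sqrt{p-1}$. (ii) For each fixed $r>1$, as $p$ crosses $1$ the two equilibria $(\pm\sqrt{r-p},\mp\sqrt{r-p})$ each undergo a subcritical Hopf bifurcation (positive first Lyapunov coefficient), with natural frequency $\omega^*=\sqrt{2(r-1)}$.
   Context: This is the simplified symmetric two-dimensional Maasch–Saltzman model. The equilibria $(\pm\sqrt{r-p},\mp\sqrt{r-p})$ exist when $r>p$. *)

theory Defs
  imports "HOL-Analysis.Analysis"
begin

text \<open>Planar vector fields are given by two component functions u v :: real => real => real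
  (the field is (x,y) |-> (u x y, v x y)).  Partial derivatives are taken coordinatewise.\<close>

definition dx :: "(real \<Rightarrow> real \<Rightarrow> real) \<Rightarrow> real \<Rightarrow> real \<Rightarrow> real" where
  "dx h = (\<lambda>x y. deriv (\<lambda>t. h t y) x)"

definition dy :: "(real \<Rightarrow> real \<Rightarrow> real) \<Rightarrow> real \<Rightarrow> real \<Rightarrow> real" where
  "dy h = (\<lambda>x y. deriv (\<lambda>t. h x t) y)"

definition tr2 :: "(real \<Rightarrow> real \<Rightarrow> real) \<Rightarrow> (real \<Rightarrow> real \<Rightarrow> real) \<Rightarrow> real \<Rightarrow> real \<Rightarrow> real" where
  "tr2 u v x y = dx u x y + dy v x y"

definition det2 :: "(real \<Rightarrow> real \<Rightarrow> real) \<Rightarrow> (real \<Rightarrow> real \<Rightarrow> real) \<Rightarrow> real \<Rightarrow> real \<Rightarrow> real" where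
  "det2 u v x y = dx u x y * dy v x y - dy u x y * dx v x y"

definition Bform :: "(real \<Rightarrow> real \<Rightarrow> real) \<Rightarrow> real \<Rightarrow> real \<Rightarrow> complex \<times> complex \<Rightarrow> complex \<times> complex \<Rightarrow> complex" where
  "Bform h x y a b =
     of_real (dx (dx h) x y) * fst a * fst b
   + of_real (dy (dx h) x y) * (fst a * snd b + snd a * fst b)
   + of_real (dy (dy h) x y) * snd a * snd b"

definition Cform :: "(real \<Rightarrow> real \<Rightarrow> real) \<Rightarrow> real \<Rightarrow> real \<Rightarrow> complex \<times> complex \<Rightarrow> complex \<times> complex \<Rightarrow> complex \<times> complex \<Rightarrow> complex" where
  "Cform h x y a b c =
     of_real (dx (dx (dx h)) x y) * fst a * fst b * fst c
   + of_real (dy (dx (dx h)) x y) * (fst a * fst b * snd c + fst a * snd b * fst c + snd a * fst b * fst c)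
   + of_real (dy (dy (dx h)) x y) * (fst a * snd b * snd c + snd a * fst b * snd c + snd a * snd b * fst c)
   + of_real (dy (dy (dy h)) x y) * snd a * snd b * snd c"

definition cinner :: "complex \<times> complex \<Rightarrow> complex \<times> complex \<Rightarrow> complex" where
  "cinner p q = cnj (fst p) * fst q + cnj (snd p) * snd q"

text \<open>Kuznetsov's normalised eigenvectors: A q = i w q, A^T p = -i w p, <p,q> = 1, <q,q> = 1.\<close>

definition lyap_vectors ::
  "(real \<Rightarrow> real \<Rightarrow> real) \<Rightarrow> (real \<Rightarrow> real \<Rightarrow> real) \<Rightarrow> real \<Rightarrow> real \<Rightarrow> real
   \<Rightarrow> complex \<times> complex \<Rightarrow> complex \<times> complex \<Rightarrow> bool" where
  "lyap_vectors u v x y w q p \<longleftrightarrow>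
     of_real (dx u x y) * fst q + of_real (dy u x y) * snd q = \<i> * of_real w * fst q \<and>
     of_real (dx v x y) * fst q + of_real (dy v x y) * snd q = \<i> * of_real w * snd q \<and>
     of_real (dx u x y) * fst p + of_real (dx v x y) * snd p = - \<i> * of_real w * fst p \<and>
     of_real (dy u x y) * fst p + of_real (dy v x y) * snd p = - \<i> * of_real w * snd p \<and>
     cinner p q = 1 \<and> cinner q q = 1"

text \<open>First Lyapunov coefficient at an equilibrium (x,y) with purely imaginary eigenvalues
  +-i w, w = sqrt(det): l1 = Re(i g20 g11 + w g21) / (2 w^2) (Kuznetsov, Elements of
  Applied Bifurcation Theory, (3.20)), with g20 = <p,B(q,q)>, g11 = <p,B(q,conj q)>,
  g21 = <p,C(q,q,conj q)>.\<close>

definition first_lyapunov_coefficient ::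
  "(real \<Rightarrow> real \<Rightarrow> real) \<Rightarrow> (real \<Rightarrow> real \<Rightarrow> real) \<Rightarrow> real \<Rightarrow> real \<Rightarrow> real" where
  "first_lyapunov_coefficient u v x y =
     (let w = sqrt (det2 u v x y);
          qp = (SOME qp. lyap_vectors u v x y w (fst qp) (snd qp));
          q = fst qp; p = snd qp;
          qb = (cnj (fst q), cnj (snd q));
          g20 = cinner p (Bform u x y q q, Bform v x y q q);
          g11 = cinner p (Bform u x y q qb, Bform v x y q qb);
          g21 = cinner p (Cform u x y q q qb, Cform v x y q q qb)
      in Re (\<i> * g20 * g11 + of_real w * g21) / (2 * w ^ 2))"

text \<open>Hopf bifurcation of the family (x,y)' = (F mu x y, G mu x y) at mu = mu0 at the equilibrium
  (x0,y0), with natural frequency w: eigenvalues +-i w (w > 0) at mu0, a continuous branch of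
  equilibria through (x0,y0), and the real part of the eigenvalues along the branch
  (= trace/2) crosses zero with nonzero speed.\<close>

definition hopf_bifurcation ::
  "(real \<Rightarrow> real \<Rightarrow> real \<Rightarrow> real) \<Rightarrow> (real \<Rightarrow> real \<Rightarrow> real \<Rightarrow> real) \<Rightarrow> real \<Rightarrow> real \<Rightarrow> real \<Rightarrow> real \<Rightarrow> bool" where
  "hopf_bifurcation F G mu0 x0 y0 w \<longleftrightarrow>
     F mu0 x0 y0 = 0 \<and> G mu0 x0 y0 = 0 \<and>
     w > 0 \<and> tr2 (F mu0) (G mu0) x0 y0 = 0 \<and> det2 (F mu0) (G mu0) x0 y0 = w ^ 2 \<and>
     (\<exists>e > 0. \<exists>X Y. X mu0 = x0 \<and> Y mu0 = y0 \<and>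
        continuous_on (ball mu0 e) X \<and> continuous_on (ball mu0 e) Y \<and>
        (\<forall>mu \<in> ball mu0 e. F mu (X mu) (Y mu) = 0 \<and> G mu (X mu) (Y mu) = 0) \<and>
        (\<exists>d. d \<noteq> 0 \<and>
           ((\<lambda>mu. tr2 (F mu) (G mu) (X mu) (Y mu) / 2) has_real_derivative d) (at mu0)))"

definition supercritical_hopf where
  "supercritical_hopf F G mu0 x0 y0 w \<longleftrightarrow>
     hopf_bifurcation F G mu0 x0 y0 w \<and> first_lyapunov_coefficient (F mu0) (G mu0) x0 y0 < 0"

definition subcritical_hopf where
  "subcritical_hopf F G mu0 x0 y0 w \<longleftrightarrow>
     hopf_bifurcation F G mu0 x0 y0 w \<and> first_lyapunov_coefficient (F mu0) (G mu0) x0 y0 > 0"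

end

theory Submission
  imports Defs
begin

text \<open>At a point \<open>(x0, y0)\<close> with \<open>r - x0\<^sup>2 = 1\<close> the Jacobian has trace 0 and determinant
  \<open>w\<^sup>2 = p - 2 x0 y0 - 1\<close>; its normalised eigenvector is proportional to \<open>(1, -(1 + i w))\<close>, and
  since only the second component is nonlinear, with \<open>-2\<close> as its single nonzero third derivative,
  the first Lyapunov coefficient is \<open>(2 x0 (2 x0 - y0) / w - w) / (2 w\<^sup>2 (2 + w\<^sup>2))\<close>. At the origin
  this is negative; at \<open>(x0, -x0)\<close> with \<open>x0\<^sup>2 = r - 1\<close> we have \<open>w\<^sup>2 = 2 x0\<^sup>2\<close> and it is positive.
  Along the branches of equilibria through these points (the origin, resp. \<open>x\<^sup>2 = r - p\<close> on the
  antidiagonal) the trace equals \<open>\<mu> - 1\<close> in the bifurcation parameter \<open>\<mu>\<close>, so the eigenvalues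
  cross the imaginary axis transversally.\<close>

definition ms_u :: "real \<Rightarrow> real \<Rightarrow> real" where
  "ms_u x y = - x - y"

definition ms_v :: "real \<Rightarrow> real \<Rightarrow> real \<Rightarrow> real \<Rightarrow> real" where
  "ms_v p r x y = r * y + p * x - x ^ 2 * y"

lemma dx_eqI:
  assumes "\<And>x y. ((\<lambda>t. h t y) has_real_derivative h' x y) (at x)"
  shows "dx h = h'"
  unfolding dx_def using assms by (intro ext DERIV_imp_deriv)

lemma dy_eqI:
  assumes "\<And>x y. ((\<lambda>t. h x t) has_real_derivative h' x y) (at y)"
  shows "dy h = h'"
  unfolding dy_def using assms by (intro ext DERIV_imp_deriv)

lemma dx_const: "dx (\<lambda>x y. c) = (\<lambda>x y. 0)"
  by (simp add: dx_def)

lemma dy_const: "dy (\<lambda>x y. c) = (\<lambda>x y. 0)"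
  by (simp add: dy_def)

lemma dx_ms_u: "dx ms_u = (\<lambda>x y. -1)"
  unfolding ms_u_def by (rule dx_eqI) (auto intro!: derivative_eq_intros)

lemma dy_ms_u: "dy ms_u = (\<lambda>x y. -1)"
  unfolding ms_u_def by (rule dy_eqI) (auto intro!: derivative_eq_intros)

lemma dx_ms_v: "dx (ms_v p r) = (\<lambda>x y. p - 2 * x * y)"
  unfolding ms_v_def by (rule dx_eqI) (auto intro!: derivative_eq_intros)

lemma dy_ms_v: "dy (ms_v p r) = (\<lambda>x y. r - x ^ 2)"
  unfolding ms_v_def by (rule dy_eqI) (auto intro!: derivative_eq_intros)

lemma dx_dx_ms_v: "dx (dx (ms_v p r)) = (\<lambda>x y. -2 * y)"
  unfolding dx_ms_v by (rule dx_eqI) (auto intro!: derivative_eq_intros)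

lemma dy_dx_ms_v: "dy (dx (ms_v p r)) = (\<lambda>x y. -2 * x)"
  unfolding dx_ms_v by (rule dy_eqI) (auto intro!: derivative_eq_intros)

lemma dy_dy_ms_v: "dy (dy (ms_v p r)) = (\<lambda>x y. 0)"
  unfolding dy_ms_v by (rule dy_eqI) (auto intro!: derivative_eq_intros)

lemma dx_dx_dx_ms_v: "dx (dx (dx (ms_v p r))) = (\<lambda>x y. 0)"
  unfolding dx_dx_ms_v by (rule dx_eqI) (auto intro!: derivative_eq_intros)

lemma dy_dx_dx_ms_v: "dy (dx (dx (ms_v p r))) = (\<lambda>x y. -2)"
  unfolding dx_dx_ms_v by (rule dy_eqI) (auto intro!: derivative_eq_intros)

lemma dy_dy_dy_ms_v: "dy (dy (dy (ms_v p r))) = (\<lambda>x y. 0)"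
  unfolding dy_dy_ms_v by (rule dy_const)

lemma dy_dy_dx_ms_v: "dy (dy (dx (ms_v p r))) = (\<lambda>x y. 0)"
  unfolding dy_dx_ms_v by (rule dy_eqI) (auto intro!: derivative_eq_intros)

lemmas ms_partials = dx_const dy_const dx_ms_u dy_ms_u dx_ms_v dy_ms_v

text \<open>The simplifier rewrites innermost first, so \<open>dx (dx (ms_v p r))\<close> must be rewritten with
  these rules before \<open>ms_partials\<close> unfolds the inner derivative.\<close>

lemmas ms_second_partials = dx_dx_ms_v dy_dx_ms_v dy_dy_ms_v

lemmas ms_third_partials = dx_dx_dx_ms_v dy_dx_dx_ms_v dy_dy_dx_ms_v dy_dy_dy_ms_v

lemma tr2_ms: "tr2 ms_u (ms_v p r) x y = r - x ^ 2 - 1"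
  by (simp add: tr2_def ms_partials)

lemma det2_ms: "det2 ms_u (ms_v p r) x y = p - 2 * x * y - (r - x ^ 2)"
  by (simp add: det2_def ms_partials)

lemma ms_antidiagonal_equilibrium: "ms_u x (- x) = 0" "ms_v p r x (- x) = x * (p - r + x ^ 2)"
  by (simp_all add: ms_u_def ms_v_def power2_eq_square algebra_simps)

lemma hopf_bifurcationI:
  fixes F G :: "real \<Rightarrow> real \<Rightarrow> real \<Rightarrow> real" and X Y :: "real \<Rightarrow> real"
  assumes "w > 0" and "e > 0" and "X mu0 = x0" and "Y mu0 = y0"
    and "continuous_on (ball mu0 e) X" and "continuous_on (ball mu0 e) Y"
    and equilibria:
      "\<And>mu. mu \<in> ball mu0 e \<Longrightarrow> F mu (X mu) (Y mu) = 0 \<and> G mu (X mu) (Y mu) = 0"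
    and trace:
      "\<And>mu. mu \<in> ball mu0 e \<Longrightarrow> tr2 (F mu) (G mu) (X mu) (Y mu) = c * (mu - mu0)"
    and "c \<noteq> 0" and "det2 (F mu0) (G mu0) x0 y0 = w ^ 2"
  shows "hopf_bifurcation F G mu0 x0 y0 w"
proof -
  have centre: "mu0 \<in> ball mu0 e"
    using \<open>e > 0\<close> by simp
  have "((\<lambda>mu. c * (mu - mu0) / 2) has_real_derivative c / 2) (at mu0)"
    by (auto intro!: derivative_eq_intros)
  then have "((\<lambda>mu. tr2 (F mu) (G mu) (X mu) (Y mu) / 2) has_real_derivative c / 2) (at mu0)"
    by (rule has_field_derivative_transform_within_open[OF _ open_ball centre]) (simp add: trace)
  moreover have "tr2 (F mu0) (G mu0) x0 y0 = 0"
    using trace[OF centre] assms(3,4) by simp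
  moreover have "F mu0 x0 y0 = 0 \<and> G mu0 x0 y0 = 0"
    using equilibria[OF centre] assms(3,4) by simp
  moreover have "c / 2 \<noteq> 0"
    using \<open>c \<noteq> 0\<close> by simp
  ultimately show ?thesis
    unfolding hopf_bifurcation_def using assms(1-7,10) by blast
qed

lemma ms_lyap_vectors_normal_form:
  assumes "w > 0" and "r - x0 ^ 2 = 1"
    and "lyap_vectors ms_u (ms_v p r) x0 y0 w (q1, q2) (p1, p2)"
  shows "q2 = - (1 + \<i> * of_real w) * q1"
    and "cnj p2 * q1 = \<i> * of_real (1 / (2 * w))"
    and "cnj q1 * q1 = of_real (1 / (2 + w ^ 2))"
proof -
  have eigen: "- q1 - q2 = \<i> * of_real w * q1"
    and adjoint: "- p1 + p2 = - \<i> * of_real w * p2"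
    and normal: "cnj p1 * q1 + cnj p2 * q2 = 1" "cnj q1 * q1 + cnj q2 * q2 = 1"
    using assms(3) unfolding lyap_vectors_def cinner_def by (simp_all add: ms_partials assms(2))
  show q2: "q2 = - (1 + \<i> * of_real w) * q1"
    using eigen by (simp add: algebra_simps)
  have p1: "p1 = (1 + \<i> * of_real w) * p2"
    using adjoint by (simp add: algebra_simps)
  have "\<i> * (cnj p2 * q1 * (- 2 * \<i> * of_real w)) = \<i>"
    using normal(1) unfolding p1 q2 by (simp add: algebra_simps)
  then have "cnj p2 * q1 * of_real (2 * w) = \<i>"
    by (simp add: algebra_simps)
  then show "cnj p2 * q1 = \<i> * of_real (1 / (2 * w))"
    using \<open>w > 0\<close> by (simp add: field_simps)
  have "(1 - \<i> * of_real w) * (1 + \<i> * of_real w) = 1 + of_real (w ^ 2)"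
    by (simp add: algebra_simps power2_eq_square)
  then have "cnj q1 * q1 * of_real (2 + w ^ 2) = 1"
    using normal(2) unfolding q2 by (simp add: algebra_simps)
  moreover have "of_real (2 + w ^ 2) \<noteq> (0 :: complex)"
    by (metis add_pos_nonneg of_real_eq_0_iff zero_le_power2 zero_less_numeral less_irrefl)
  ultimately show "cnj q1 * q1 = of_real (1 / (2 + w ^ 2))"
    by (simp add: eq_divide_eq del: of_real_add of_real_power)
qed

lemma ms_lyap_vectors_exist:
  assumes "w > 0" and "p - 2 * x0 * y0 = 1 + w ^ 2" and "r - x0 ^ 2 = 1"
  shows "\<exists>qp. lyap_vectors ms_u (ms_v p r) x0 y0 w (fst qp) (snd qp)"
proof -
  define k where "k = 1 / sqrt (2 + w ^ 2)"
  have "k > 0"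
    unfolding k_def by (simp add: add_pos_nonneg)
  have "2 + w ^ 2 > 0"
    by (simp add: add_pos_nonneg)
  then have "k * k * (2 + w ^ 2) = 1"
    unfolding k_def by (simp add: field_simps)
  \<comment> \<open>\<open>q = k (1, -(1 + i w))\<close> and \<open>p = ((1 + i w) p2, p2)\<close> with \<open>cnj p2 * k = i / (2 w)\<close>\<close>
  then have "lyap_vectors ms_u (ms_v p r) x0 y0 w
      (Complex k 0, Complex (- k) (- w * k))
      (Complex (1 / (2 * k)) (- 1 / (2 * w * k)), Complex 0 (- 1 / (2 * w * k)))"
    unfolding lyap_vectors_def cinner_def using assms \<open>k > 0\<close>
    by (simp add: complex_eq_iff ms_partials eq_diff_eq field_simps power2_eq_square)
  then show ?thesis
    by (metis fst_conv snd_conv)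
qed

lemma first_lyapunov_coefficient_ms:
  assumes "w > 0" and "p - 2 * x0 * y0 = 1 + w ^ 2" and "r - x0 ^ 2 = 1"
  shows "first_lyapunov_coefficient ms_u (ms_v p r) x0 y0
    = (2 * x0 * (2 * x0 - y0) / w - w) / (2 * w ^ 2 * (2 + w ^ 2))"
proof -
  have sqrt_det: "sqrt (det2 ms_u (ms_v p r) x0 y0) = w"
    using assms by (simp add: det2_ms)
  define qp where "qp = (SOME qp. lyap_vectors ms_u (ms_v p r) x0 y0 w (fst qp) (snd qp))"
  obtain q1 q2 p1 p2 where qp: "qp = ((q1, q2), (p1, p2))"
    by (metis prod.collapse)
  have "lyap_vectors ms_u (ms_v p r) x0 y0 w (q1, q2) (p1, p2)"
    using someI_ex[OF ms_lyap_vectors_exist[OF assms]] unfolding qp_def[symmetric] qp by simp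
  note normal_form = ms_lyap_vectors_normal_form[OF assms(1,3) this]
  define z where "z = cnj p2 * q1"
  define n where "n = cnj q1 * q1"
  have g20: "cinner (p1, p2) (Bform ms_u x0 y0 (q1, q2) (q1, q2),
        Bform (ms_v p r) x0 y0 (q1, q2) (q1, q2))
      = z * q1 * (4 * of_real x0 * (1 + \<i> * of_real w) - 2 * of_real y0)"
    unfolding z_def by (simp only: Bform_def ms_second_partials)
      (simp add: cinner_def ms_partials normal_form(1) algebra_simps)
  have g11: "cinner (p1, p2) (Bform ms_u x0 y0 (q1, q2) (cnj q1, cnj q2),
        Bform (ms_v p r) x0 y0 (q1, q2) (cnj q1, cnj q2))
      = z * cnj q1 * (4 * of_real x0 - 2 * of_real y0)"
    unfolding z_def by (simp only: Bform_def ms_second_partials)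
      (simp add: cinner_def ms_partials normal_form(1) algebra_simps)
  have g21: "cinner (p1, p2) (Cform ms_u x0 y0 (q1, q2) (q1, q2) (cnj q1, cnj q2),
        Cform (ms_v p r) x0 y0 (q1, q2) (q1, q2) (cnj q1, cnj q2))
      = 2 * z * n * (3 + \<i> * of_real w)"
    unfolding z_def n_def by (simp only: Cform_def ms_third_partials)
      (simp add: cinner_def ms_partials normal_form(1) algebra_simps)
  define c where "c = 1 / (2 * w)"
  define m where "m = 1 / (2 + w ^ 2)"
  have z: "z = \<i> * of_real c" and n: "n = of_real m"
    unfolding z_def c_def n_def m_def by (fact normal_form(2), fact normal_form(3))
  have "\<i> * (z * q1 * (4 * of_real x0 * (1 + \<i> * of_real w) - 2 * of_real y0))
      * (z * cnj q1 * (4 * of_real x0 - 2 * of_real y0))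
      + of_real w * (2 * z * n * (3 + \<i> * of_real w))
    = \<i> * z ^ 2 * n * (4 * of_real x0 * (1 + \<i> * of_real w) - 2 * of_real y0)
        * (4 * of_real x0 - 2 * of_real y0)
      + 2 * of_real w * z * n * (3 + \<i> * of_real w)"
    unfolding n_def by (simp add: algebra_simps power2_eq_square)
  also have "Re \<dots> = m * (4 * c ^ 2 * w * x0 * (4 * x0 - 2 * y0) - 2 * c * w ^ 2)"
    unfolding z n by (simp add: power2_eq_square algebra_simps)
  also have "\<dots> = m * (2 * x0 * (2 * x0 - y0) / w - w)"
    unfolding c_def using \<open>w > 0\<close> by (simp add: power2_eq_square field_simps)
  finally show ?thesis
    unfolding first_lyapunov_coefficient_def Let_def sqrt_det qp_def[symmetric] qp prod.sel
      g20 g11 g21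
    by (simp add: m_def)
qed

lemma ms_origin_supercritical_hopf:
  assumes "p > 1"
  shows "supercritical_hopf (\<lambda>r. ms_u) (\<lambda>r. ms_v p r) 1 0 0 (sqrt (p - 1))"
proof -
  define w where "w = sqrt (p - 1)"
  have w: "w > 0" "w ^ 2 = p - 1"
    using assms unfolding w_def by auto
  have "hopf_bifurcation (\<lambda>r. ms_u) (\<lambda>r. ms_v p r) 1 0 0 w"
    by (rule hopf_bifurcationI[where e = 1 and X = "\<lambda>_. 0" and Y = "\<lambda>_. 0" and c = 1])
      (auto simp: w ms_u_def ms_v_def tr2_ms det2_ms)
  moreover have "first_lyapunov_coefficient ms_u (ms_v p 1) 0 0 = - w / (2 * w ^ 2 * (2 + w ^ 2))"
    using first_lyapunov_coefficient_ms[of w p 0 0 1] w by simp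
  moreover have "- w / (2 * w ^ 2 * (2 + w ^ 2)) < 0"
    using w(1) by (simp add: divide_neg_pos add_pos_nonneg)
  ultimately show ?thesis
    unfolding supercritical_hopf_def w_def by simp
qed

lemma ms_antidiagonal_subcritical_hopf:
  assumes "r > 1" and "x0 ^ 2 = r - 1"
  shows "subcritical_hopf (\<lambda>p. ms_u) (\<lambda>p. ms_v p r) 1 x0 (- x0) (sqrt (2 * (r - 1)))"
proof -
  define w where "w = sqrt (2 * (r - 1))"
  have w: "w > 0" "w ^ 2 = 2 * x0 ^ 2"
    using assms unfolding w_def by auto
  define X where "X mu = x0 * sqrt ((r - mu) / (r - 1))" for mu
  have X_sq: "X mu ^ 2 = r - mu" if "mu \<in> ball 1 (r - 1)" for mu
    using that assms by (auto simp: X_def power_mult_distrib dist_real_def)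
  have hopf: "hopf_bifurcation (\<lambda>p. ms_u) (\<lambda>p. ms_v p r) 1 x0 (- x0) w"
  proof (rule hopf_bifurcationI[where e = "r - 1" and X = X and Y = "\<lambda>mu. - X mu" and c = 1])
    show "continuous_on (ball 1 (r - 1)) X" "continuous_on (ball 1 (r - 1)) (\<lambda>mu. - X mu)"
      unfolding X_def using assms(1) by (auto intro!: continuous_intros)
  qed (use assms w X_sq in
      \<open>auto simp: X_def ms_antidiagonal_equilibrium tr2_ms det2_ms power2_eq_square\<close>)
  have "first_lyapunov_coefficient ms_u (ms_v 1 r) x0 (- x0)
      = (2 * x0 * (2 * x0 - - x0) / w - w) / (2 * w ^ 2 * (2 + w ^ 2))"
    by (rule first_lyapunov_coefficient_ms) (use w assms in \<open>simp_all add: power2_eq_square\<close>)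
  also have "2 * x0 * (2 * x0 - - x0) / w - w = 2 * w"
    using w by (simp add: power2_eq_square field_simps)
  finally have "first_lyapunov_coefficient ms_u (ms_v 1 r) x0 (- x0)
      = 2 * w / (2 * w ^ 2 * (2 + w ^ 2))" .
  moreover have "2 * w / (2 * w ^ 2 * (2 + w ^ 2)) > 0"
    using w(1) by (simp add: add_pos_nonneg)
  ultimately show ?thesis
    using hopf unfolding subcritical_hopf_def w_def by simp
qed

theorem mainTheorem2:
  shows "(\<forall>p::real. p > 1 \<longrightarrow>
            supercritical_hopf (\<lambda>r x y. - x - y) (\<lambda>r x y. r * y + p * x - x ^ 2 * y)
              1 0 0 (sqrt (p - 1)))
       \<and> (\<forall>r::real. r > 1 \<longrightarrow>
            subcritical_hopf (\<lambda>p x y. - x - y) (\<lambda>p x y. r * y + p * x - x ^ 2 * y)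
              1 (sqrt (r - 1)) (- sqrt (r - 1)) (sqrt (2 * (r - 1)))
          \<and> subcritical_hopf (\<lambda>p x y. - x - y) (\<lambda>p x y. r * y + p * x - x ^ 2 * y)
              1 (- sqrt (r - 1)) (sqrt (r - 1)) (sqrt (2 * (r - 1))))"
proof -
  have u: "(\<lambda>(_::real) x y. - x - y) = (\<lambda>_. ms_u)"
    by (intro ext) (simp add: ms_u_def)
  have v_r: "(\<lambda>r x y. r * y + p * x - x ^ 2 * y) = (\<lambda>r. ms_v p r)"
    and v_p: "(\<lambda>p x y. r * y + p * x - x ^ 2 * y) = (\<lambda>p. ms_v p r)" for p r :: real
    by (intro ext, simp add: ms_v_def)+
  show ?thesis
    unfolding u v_r v_p
    using ms_origin_supercritical_hopf ms_antidiagonal_subcritical_hopf[of _ "sqrt (r - 1)" for r]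
      ms_antidiagonal_subcritical_hopf[of _ "- sqrt (r - 1)" for r]
    by simp
qed

end
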